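(* Fix $N=\{1,\dots,n\}$ and a cost function $C:2^N\to\mathbb{R}_{\ge0}$ with $C(\emptyset)=0$. Consider maps assigning to each probability distribution $\mathcal{D}$ over $2^N$ a vector $\phi^{\mathcal{D}}\in\mathbb{R}^n$. Among such maps, the data-dependent Shapley value $$\phi^{\mathcal{D}}_i=\sum_{S\subseteq N:\, i\in S}\Pr[S\sim\mathcal{D}]\cdot\frac{C(S)}{|S|}$$ is the unique one satisfying the following four axioms: (Balance) $\sum_{i\in N}\phi^{\mathcal{D}}_i=\mathbb{E}_{S\sim\mathcal{D}}[C(S)]$ for all $\mathcal{D}$; (Symmetry) for all $\mathcal{D}$ and all $i,j$, if $\Pr_{S\sim\mathcal{D}}[|S\cap\{i,j\}|=1]=0$ then $\phi^{\mathcal{D}}_i=\phi^{\mathcal{D}}_j$; (Zero element) for all $\mathcal{D}$ and all $i$, if $\Pr_{S\sim\mathcal{D}}[i\in S]=0$ then $\phi^{\mathcal{D}}_i=0$; (Additivity) for all $i$, all distributions $\mathcal{D}_1,\mathcal{D}_2$ and all $\alpha,\beta\ge0$ with $\alpha+\beta=1$, $\phi^{\alpha\mathcal{D}_1+\beta\mathcal{D}_2}_i=\alpha\phi^{\mathcal{D}_1}_i+\beta\phi^{\mathcal{D}_2}_i$, where $\alpha\mathcal{D}_1+\beta\mathcal{D}_2$ is the mixture with $\Pr[S\sim\alpha\mathcal{D}_1+\beta\mathcal{D}_2]=\alpha\Pr[S\sim\mathcal{D}_1]+\beta\Pr[S\sim\mathcal{D}_2]$. *)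

theory Defs
  imports Main Complex_Main
begin

text \<open>Ground set N = {1..n}. A probability distribution over 2^N is represented by its
 probability mass function p :: nat set => real, supported on subsets of N.\<close>

definition ground :: "nat \<Rightarrow> nat set" where
  "ground n = {1..n}"

definition is_dist :: "nat \<Rightarrow> (nat set \<Rightarrow> real) \<Rightarrow> bool" where
  "is_dist n p \<longleftrightarrow> (\<forall>S. 0 \<le> p S) \<and> (\<forall>S. \<not> S \<subseteq> ground n \<longrightarrow> p S = 0)
     \<and> (\<Sum>S\<in>Pow (ground n). p S) = 1"

definition prob_ev :: "nat \<Rightarrow> (nat set \<Rightarrow> real) \<Rightarrow> (nat set \<Rightarrow> bool) \<Rightarrow> real" where
  "prob_ev n p P = (\<Sum>S\<in>{S\<in>Pow (ground n). P S}. p S)"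

definition expect :: "nat \<Rightarrow> (nat set \<Rightarrow> real) \<Rightarrow> (nat set \<Rightarrow> real) \<Rightarrow> real" where
  "expect n p C = (\<Sum>S\<in>Pow (ground n). p S * C S)"

definition mixture :: "real \<Rightarrow> (nat set \<Rightarrow> real) \<Rightarrow> real \<Rightarrow> (nat set \<Rightarrow> real) \<Rightarrow> (nat set \<Rightarrow> real)" where
  "mixture a p b q = (\<lambda>S. a * p S + b * q S)"

definition dd_shapley :: "nat \<Rightarrow> (nat set \<Rightarrow> real) \<Rightarrow> (nat set \<Rightarrow> real) \<Rightarrow> nat \<Rightarrow> real" where
  "dd_shapley n C p i = (\<Sum>S\<in>{S\<in>Pow (ground n). i \<in> S}. p S * (C S / real (card S)))"

definition balance :: "nat \<Rightarrow> (nat set \<Rightarrow> real) \<Rightarrow> ((nat set \<Rightarrow> real) \<Rightarrow> nat \<Rightarrow> real) \<Rightarrow> bool" where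
  "balance n C \<phi> \<longleftrightarrow> (\<forall>p. is_dist n p \<longrightarrow> (\<Sum>i\<in>ground n. \<phi> p i) = expect n p C)"

definition symmetry :: "nat \<Rightarrow> ((nat set \<Rightarrow> real) \<Rightarrow> nat \<Rightarrow> real) \<Rightarrow> bool" where
  "symmetry n \<phi> \<longleftrightarrow> (\<forall>p i j. is_dist n p \<longrightarrow> i \<in> ground n \<longrightarrow> j \<in> ground n \<longrightarrow>
      prob_ev n p (\<lambda>S. card (S \<inter> {i, j}) = 1) = 0 \<longrightarrow> \<phi> p i = \<phi> p j)"

definition zero_element :: "nat \<Rightarrow> ((nat set \<Rightarrow> real) \<Rightarrow> nat \<Rightarrow> real) \<Rightarrow> bool" where
  "zero_element n \<phi> \<longleftrightarrow> (\<forall>p i. is_dist n p \<longrightarrow> i \<in> ground n \<longrightarrow>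
      prob_ev n p (\<lambda>S. i \<in> S) = 0 \<longrightarrow> \<phi> p i = 0)"

definition additivity :: "nat \<Rightarrow> ((nat set \<Rightarrow> real) \<Rightarrow> nat \<Rightarrow> real) \<Rightarrow> bool" where
  "additivity n \<phi> \<longleftrightarrow> (\<forall>i p q a b. i \<in> ground n \<longrightarrow> is_dist n p \<longrightarrow> is_dist n q \<longrightarrow>
      0 \<le> a \<longrightarrow> 0 \<le> b \<longrightarrow> a + b = 1 \<longrightarrow>
      \<phi> (mixture a p b q) i = a * \<phi> p i + b * \<phi> q i)"

end

theory Submission
  imports Defs
begin

text \<open>On a point mass at a coalition S, zero element and symmetry force every member of S to
  receive the same share and every non-member nothing, so balance fixes the share to C(S)/|S|.
  Every distribution on the finite set 2^N is a finite convex combination of point masses, so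
  additivity extends this to all distributions. Conversely the data-dependent Shapley value is
  linear in the distribution and satisfies the other axioms directly.\<close>

definition point_dist :: "nat set \<Rightarrow> nat set \<Rightarrow> real" where
  "point_dist S0 = (\<lambda>S. if S = S0 then 1 else 0)"

lemma finite_ground [simp]: "finite (ground n)"
  by (simp add: ground_def)

lemma sum_point_dist_mult:
  "(\<Sum>S\<in>A. point_dist S0 S * f S) = (if S0 \<in> A then f S0 else 0)" if "finite A"
proof -
  have "(\<Sum>S\<in>A. point_dist S0 S * f S) = (\<Sum>S\<in>A. if S = S0 then f S0 else 0)"
    by (rule sum.cong) (auto simp: point_dist_def)
  then show ?thesis using that by simp
qed

lemma is_dist_point_dist: "S0 \<subseteq> ground n \<Longrightarrow> is_dist n (point_dist S0)"
  unfolding is_dist_def by (auto simp: point_dist_def)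

lemma prob_ev_point_dist:
  "S0 \<subseteq> ground n \<Longrightarrow> prob_ev n (point_dist S0) P = (if P S0 then 1 else 0)"
  unfolding prob_ev_def using sum_point_dist_mult[of "{S \<in> Pow (ground n). P S}" S0 "\<lambda>_. 1"]
  by simp

lemma expect_point_dist: "S0 \<subseteq> ground n \<Longrightarrow> expect n (point_dist S0) C = C S0"
  unfolding expect_def using sum_point_dist_mult[of "Pow (ground n)" S0 C] by simp

lemma dd_shapley_point_dist:
  "S0 \<subseteq> ground n \<Longrightarrow>
     dd_shapley n C (point_dist S0) i = (if i \<in> S0 then C S0 / card S0 else 0)"
  unfolding dd_shapley_def
  using sum_point_dist_mult[of "{S \<in> Pow (ground n). i \<in> S}" S0 "\<lambda>S. C S / card S"] by simp

lemma is_dist_mixture: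
  assumes "is_dist n p" "is_dist n q" "0 \<le> a" "0 \<le> b" "a + b = 1"
  shows "is_dist n (mixture a p b q)"
  using assms unfolding is_dist_def mixture_def
  by (auto simp: sum.distrib sum_distrib_left[symmetric])

lemma support_subset_ground: "is_dist n p \<Longrightarrow> p S \<noteq> 0 \<Longrightarrow> S \<subseteq> ground n"
  unfolding is_dist_def by blast

lemma dist_nonneg: "is_dist n p \<Longrightarrow> 0 \<le> p S"
  unfolding is_dist_def by blast

lemma dist_sum_eq_1: "is_dist n p \<Longrightarrow> (\<Sum>S\<in>Pow (ground n). p S) = 1"
  unfolding is_dist_def by blast

lemma mass_eq_0_if_prob_ev_eq_0:
  assumes "is_dist n p" "prob_ev n p P = 0" "S \<subseteq> ground n" "P S"
  shows "p S = 0"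
proof -
  have "\<forall>S\<in>{S \<in> Pow (ground n). P S}. p S = 0"
    using assms(2) dist_nonneg[OF assms(1)] unfolding prob_ev_def
    by (subst sum_nonneg_eq_0_iff[symmetric]) auto
  thus ?thesis using assms(3,4) by auto
qed

lemma dist_mass_le_1:
  assumes p: "is_dist n p"
  shows "p S \<le> 1"
proof (cases "S \<subseteq> ground n")
  case True
  then have "p S \<le> (\<Sum>S\<in>Pow (ground n). p S)"
    using dist_nonneg[OF p] by (intro member_le_sum) auto
  then show ?thesis using dist_sum_eq_1[OF p] by simp
next
  case False
  then have "p S = 0" using support_subset_ground[OF p] by blast
  then show ?thesis by simp
qed

lemma dist_eq_point_dist:
  assumes p: "is_dist n p" and "p S0 = 1"
  shows "p = point_dist S0"
proof -
  have S0: "S0 \<in> Pow (ground n)" using support_subset_ground[OF p] \<open>p S0 = 1\<close> by simp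
  have "(\<Sum>S\<in>Pow (ground n) - {S0}. p S) = 0"
    using dist_sum_eq_1[OF p] \<open>p S0 = 1\<close> S0 by (simp add: sum.remove)
  then have rest: "\<forall>S\<in>Pow (ground n) - {S0}. p S = 0"
    using dist_nonneg[OF p] by (subst sum_nonneg_eq_0_iff[symmetric]) auto
  have "p S = point_dist S0 S" for S
    using rest \<open>p S0 = 1\<close> support_subset_ground[OF p, of S]
    unfolding point_dist_def by (cases "S = S0") auto
  then show ?thesis by (rule ext)
qed

text \<open>The second component q is p conditioned on the event S \<noteq> S0.\<close>

lemma dist_decompose_point_dist:
  assumes p: "is_dist n p" and S0: "S0 \<subseteq> ground n" and lt: "p S0 < 1"
  obtains q where "is_dist n q" "q S0 = 0" "\<And>S. p S = 0 \<Longrightarrow> q S = 0"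
    "p = mixture (p S0) (point_dist S0) (1 - p S0) q"
proof
  define q where "q = (\<lambda>S. if S = S0 then 0 else p S / (1 - p S0))"
  have total: "(\<Sum>S\<in>Pow (ground n). p S) = p S0 + (\<Sum>S\<in>Pow (ground n) - {S0}. p S)"
    using S0 by (simp add: sum.remove)
  have "(\<Sum>S\<in>Pow (ground n). q S) = (\<Sum>S\<in>Pow (ground n) - {S0}. p S) / (1 - p S0)"
    using S0 by (simp add: sum.remove q_def sum_divide_distrib)
  also have "\<dots> = 1" using dist_sum_eq_1[OF p] total lt by simp
  finally show "is_dist n q"
    using dist_nonneg[OF p] support_subset_ground[OF p] lt unfolding is_dist_def q_def by auto
  show "q S0 = 0" "\<And>S. p S = 0 \<Longrightarrow> q S = 0" by (simp_all add: q_def)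
  show "p = mixture (p S0) (point_dist S0) (1 - p S0) q"
    using lt by (intro ext) (auto simp: mixture_def point_dist_def q_def)
qed

lemma additivityD:
  "additivity n \<phi> \<Longrightarrow> i \<in> ground n \<Longrightarrow> is_dist n p \<Longrightarrow> is_dist n q \<Longrightarrow>
    0 \<le> a \<Longrightarrow> 0 \<le> b \<Longrightarrow> a + b = 1 \<Longrightarrow>
    \<phi> (mixture a p b q) i = a * \<phi> p i + b * \<phi> q i"
  unfolding additivity_def by blast

lemma additive_eq_if_eq_on_point_dists:
  assumes A\<phi>: "additivity n \<phi>" and A\<psi>: "additivity n \<psi>"
    and point: "\<And>S. S \<subseteq> ground n \<Longrightarrow> \<phi> (point_dist S) i = \<psi> (point_dist S) i"
    and p: "is_dist n p" and i: "i \<in> ground n"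
  shows "\<phi> p i = \<psi> p i"
proof -
  have supported: "\<phi> p i = \<psi> p i"
    if "finite F" "is_dist n p" "\<And>S. S \<notin> F \<Longrightarrow> p S = 0" for F p
    using that
  proof (induction F arbitrary: p rule: finite_induct)
    case empty
    then have "(\<Sum>S\<in>Pow (ground n). p S) = 0" by (intro sum.neutral) blast
    with dist_sum_eq_1[OF empty.prems(1)] show ?case by linarith
  next
    case (insert S0 F)
    note p = \<open>is_dist n p\<close>
    consider "p S0 = 0" | "p S0 = 1" | "p S0 \<noteq> 0" "p S0 \<noteq> 1" by blast
    then show ?case
    proof cases
      case 1
      have "p S = 0" if "S \<notin> F" for S
        using insert.prems(2)[of S] 1 that by (cases "S = S0") auto
      then show ?thesis by (rule insert.IH[OF p])
    next
      case 2
      then have "S0 \<subseteq> ground n" using support_subset_ground[OF p] by simp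
      then show ?thesis using point dist_eq_point_dist[OF p 2] by simp
    next
      case 3
      have S0: "S0 \<subseteq> ground n" using support_subset_ground[OF p 3(1)] .
      have lt: "p S0 < 1" using dist_mass_le_1[OF p, of S0] 3(2) by linarith
      obtain q where q: "is_dist n q" "q S0 = 0" "\<And>S. p S = 0 \<Longrightarrow> q S = 0"
        and p_eq: "p = mixture (p S0) (point_dist S0) (1 - p S0) q"
        by (rule dist_decompose_point_dist[OF p S0 lt]) (rule that)
      have "q S = 0" if "S \<notin> F" for S
        using insert.prems(2)[of S] q(2,3) that by (cases "S = S0") auto
      then have IH: "\<phi> q i = \<psi> q i" by (rule insert.IH[OF q(1)])
      have mix: "\<chi> p i = p S0 * \<chi> (point_dist S0) i + (1 - p S0) * \<chi> q i"
        if "additivity n \<chi>" for \<chi>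
      proof -
        have "\<chi> (mixture (p S0) (point_dist S0) (1 - p S0) q) i
            = p S0 * \<chi> (point_dist S0) i + (1 - p S0) * \<chi> q i"
          using lt by (intro additivityD[OF that i is_dist_point_dist[OF S0] q(1)
              dist_nonneg[OF p]]) simp_all
        then show ?thesis by (simp only: p_eq[symmetric])
      qed
      show ?thesis using mix[OF A\<phi>] mix[OF A\<psi>] point[OF S0] IH by simp
    qed
  qed
  have "p S = 0" if "S \<notin> Pow (ground n)" for S
    using support_subset_ground[OF p, of S] that by auto
  then show ?thesis by (intro supported[of "Pow (ground n)", OF _ p]) simp_all
qed

lemma balanceD: "balance n C \<phi> \<Longrightarrow> is_dist n p \<Longrightarrow> (\<Sum>i\<in>ground n. \<phi> p i) = expect n p C"
  unfolding balance_def by blast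

lemma symmetryD:
  "symmetry n \<phi> \<Longrightarrow> is_dist n p \<Longrightarrow> i \<in> ground n \<Longrightarrow> j \<in> ground n \<Longrightarrow>
    prob_ev n p (\<lambda>S. card (S \<inter> {i, j}) = 1) = 0 \<Longrightarrow> \<phi> p i = \<phi> p j"
  unfolding symmetry_def by blast

lemma zero_elementD:
  "zero_element n \<phi> \<Longrightarrow> is_dist n p \<Longrightarrow> i \<in> ground n \<Longrightarrow>
    prob_ev n p (\<lambda>S. i \<in> S) = 0 \<Longrightarrow> \<phi> p i = 0"
  unfolding zero_element_def by blast

lemma point_dist_share_if_axioms:
  assumes B: "balance n C \<phi>" and Sy: "symmetry n \<phi>" and Z: "zero_element n \<phi>"
    and S0: "S0 \<subseteq> ground n" and i: "i \<in> ground n"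
  shows "\<phi> (point_dist S0) i = dd_shapley n C (point_dist S0) i"
proof -
  note pd = is_dist_point_dist[OF S0] and Pr = prob_ev_point_dist[OF S0]
  have zero: "\<phi> (point_dist S0) j = 0" if "j \<in> ground n" "j \<notin> S0" for j
    using zero_elementD[OF Z pd that(1)] Pr that(2) by simp
  have equal: "\<phi> (point_dist S0) j = \<phi> (point_dist S0) i" if "j \<in> S0" "i \<in> S0" for j
  proof (cases "j = i")
    case False
    with that have "card (S0 \<inter> {j, i}) = 2" by (simp add: Int_absorb1)
    then show ?thesis using symmetryD[OF Sy pd _ i] that(1) S0 Pr by auto
  qed simp
  show ?thesis
  proof (cases "i \<in> S0")
    case False
    then show ?thesis using zero i dd_shapley_point_dist[OF S0] by simp
  next
    case True
    have "C S0 = (\<Sum>j\<in>ground n. \<phi> (point_dist S0) j)"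
      using balanceD[OF B pd] expect_point_dist[OF S0] by simp
    also have "\<dots> = (\<Sum>j\<in>S0. \<phi> (point_dist S0) j)"
      using S0 zero by (intro sum.mono_neutral_right) auto
    also have "\<dots> = (\<Sum>j\<in>S0. \<phi> (point_dist S0) i)"
      by (rule sum.cong[OF refl equal[OF _ True]])
    also have "\<dots> = card S0 * \<phi> (point_dist S0) i"
      by simp
    finally have "\<phi> (point_dist S0) i = C S0 / card S0"
      using True S0 finite_subset[OF S0] by (auto simp: field_simps card_gt_0_iff)
    then show ?thesis using True dd_shapley_point_dist[OF S0] by simp
  qed
qed

lemma dd_shapley_as_sum_over_Pow:
  "dd_shapley n C p i = (\<Sum>S\<in>Pow (ground n). if i \<in> S then p S * (C S / card S) else 0)"
  unfolding dd_shapley_def by (simp add: sum.inter_filter[symmetric])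

lemma balance_dd_shapley:
  assumes "C {} = 0"
  shows "balance n C (dd_shapley n C)"
  unfolding balance_def
proof (intro allI impI)
  fix p
  have "(\<Sum>i\<in>ground n. dd_shapley n C p i)
      = (\<Sum>S\<in>Pow (ground n). \<Sum>i\<in>ground n. if i \<in> S then p S * (C S / card S) else 0)"
    unfolding dd_shapley_as_sum_over_Pow by (rule sum.swap)
  also have "\<dots> = (\<Sum>S\<in>Pow (ground n). card S * (p S * (C S / card S)))"
  proof (intro sum.cong refl)
    fix S assume "S \<in> Pow (ground n)"
    then have "ground n \<inter> S = S" by blast
    then show "(\<Sum>i\<in>ground n. if i \<in> S then p S * (C S / card S) else 0)
        = card S * (p S * (C S / card S))"
      by (simp add: sum.If_cases)
  qed
  also have "\<dots> = (\<Sum>S\<in>Pow (ground n). p S * C S)"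
    using assms by (intro sum.cong) (auto dest: finite_subset)
  finally show "(\<Sum>i\<in>ground n. dd_shapley n C p i) = expect n p C"
    unfolding expect_def .
qed

lemma card_Int_doubleton_neq_1_iff_mem:
  "card (S \<inter> {i, j}) \<noteq> 1 \<Longrightarrow> (i \<in> S \<longleftrightarrow> j \<in> S)"
  by (cases "i \<in> S"; cases "j \<in> S"; cases "i = j") (auto simp: Int_insert_right)

lemma symmetry_dd_shapley: "symmetry n (dd_shapley n C)"
  unfolding symmetry_def dd_shapley_as_sum_over_Pow
proof (intro allI impI sum.cong refl)
  fix p i j S
  assume p: "is_dist n p" and Pr: "prob_ev n p (\<lambda>S. card (S \<inter> {i, j}) = 1) = 0"
    and S: "S \<in> Pow (ground n)"
  show "(if i \<in> S then p S * (C S / card S) else 0) = (if j \<in> S then p S * (C S / card S) else 0)"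
  proof (cases "card (S \<inter> {i, j}) = 1")
    case True
    with S have "p S = 0" using mass_eq_0_if_prob_ev_eq_0[OF p Pr] by blast
    then show ?thesis by simp
  next
    case False
    then have "i \<in> S \<longleftrightarrow> j \<in> S" by (rule card_Int_doubleton_neq_1_iff_mem)
    then show ?thesis by metis
  qed
qed

lemma zero_element_dd_shapley: "zero_element n (dd_shapley n C)"
  unfolding zero_element_def dd_shapley_def
proof (intro allI impI sum.neutral ballI)
  fix p i S
  assume p: "is_dist n p" and Pr: "prob_ev n p (\<lambda>S. i \<in> S) = 0"
    and S: "S \<in> {S \<in> Pow (ground n). i \<in> S}"
  then have "p S = 0" using mass_eq_0_if_prob_ev_eq_0[OF p Pr, of S] by blast
  then show "p S * (C S / card S) = 0" by simp
qed

lemma dd_shapley_mixture: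
  "dd_shapley n C (mixture a p b q) i = a * dd_shapley n C p i + b * dd_shapley n C q i"
  unfolding dd_shapley_def mixture_def
  by (simp add: sum_distrib_left sum.distrib algebra_simps)

lemma additivity_dd_shapley: "additivity n (dd_shapley n C)"
  unfolding additivity_def by (simp add: dd_shapley_mixture)

lemma axioms_cong:
  assumes eq: "\<And>p i. is_dist n p \<Longrightarrow> i \<in> ground n \<Longrightarrow> \<phi> p i = \<psi> p i"
  shows "balance n C \<phi> = balance n C \<psi>" and "symmetry n \<phi> = symmetry n \<psi>"
    and "zero_element n \<phi> = zero_element n \<psi>" and "additivity n \<phi> = additivity n \<psi>"
proof -
  have "(\<Sum>i\<in>ground n. \<phi> p i) = (\<Sum>i\<in>ground n. \<psi> p i)" if "is_dist n p" for p
    using that eq by (intro sum.cong) auto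
  then show "balance n C \<phi> = balance n C \<psi>"
    unfolding balance_def by simp
  show "symmetry n \<phi> = symmetry n \<psi>" "zero_element n \<phi> = zero_element n \<psi>"
    unfolding symmetry_def zero_element_def by (simp_all add: eq)
  show "additivity n \<phi> = additivity n \<psi>"
    unfolding additivity_def by (simp add: eq is_dist_mixture)
qed

theorem theorem10:
  fixes n :: nat and C :: "nat set \<Rightarrow> real"
  assumes "\<forall>S\<subseteq>ground n. 0 \<le> C S"
    and "C {} = 0"
  shows "\<forall>\<phi> :: (nat set \<Rightarrow> real) \<Rightarrow> nat \<Rightarrow> real.
           (balance n C \<phi> \<and> symmetry n \<phi> \<and> zero_element n \<phi> \<and> additivity n \<phi>)
           \<longleftrightarrow> (\<forall>p i. is_dist n p \<longrightarrow> i \<in> ground n \<longrightarrow> \<phi> p i = dd_shapley n C p i)"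
proof (rule allI, rule iffI)
  fix \<phi> :: "(nat set \<Rightarrow> real) \<Rightarrow> nat \<Rightarrow> real"
  assume "balance n C \<phi> \<and> symmetry n \<phi> \<and> zero_element n \<phi> \<and> additivity n \<phi>"
  then have "\<phi> p i = dd_shapley n C p i" if "is_dist n p" "i \<in> ground n" for p i
    using additive_eq_if_eq_on_point_dists[OF _ additivity_dd_shapley _ that]
      point_dist_share_if_axioms[OF _ _ _ _ that(2)] by blast
  then show "\<forall>p i. is_dist n p \<longrightarrow> i \<in> ground n \<longrightarrow> \<phi> p i = dd_shapley n C p i"
    by blast
next
  fix \<phi> :: "(nat set \<Rightarrow> real) \<Rightarrow> nat \<Rightarrow> real"
  assume "\<forall>p i. is_dist n p \<longrightarrow> i \<in> ground n \<longrightarrow> \<phi> p i = dd_shapley n C p i"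
  then have "balance n C \<phi> = balance n C (dd_shapley n C)" "symmetry n \<phi> = symmetry n (dd_shapley n C)"
    "zero_element n \<phi> = zero_element n (dd_shapley n C)"
    "additivity n \<phi> = additivity n (dd_shapley n C)"
    using axioms_cong[of n \<phi> "dd_shapley n C"] by simp_all
  then show "balance n C \<phi> \<and> symmetry n \<phi> \<and> zero_element n \<phi> \<and> additivity n \<phi>"
    using balance_dd_shapley[where C = C, OF assms(2)] symmetry_dd_shapley zero_element_dd_shapley
      additivity_dd_shapley by simp
qed

end
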